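(* Let $k\ge3$ be an integer, $p>k+1$ a prime, and $l$ a positive integer with $(k+1)\nmid l$. Then the tuple $(1,2,\ldots,k)$, viewed as an element of $\mathbb{Z}_{p,l}^k$, is $(k,p,l)$-improper. Consequently, if $p>k+1$ and $I(k,p,l)=\emptyset$, then $(k+1)\mid l$.
   Context: For $x\in\mathbb{R}$, $\lVert x\rVert$ is the distance from $x$ to the nearest integer. $\mathbb{Z}_n$ denotes integers modulo $n$; $\mathbb{Z}_{p,l}:=\mathbb{Z}_{pl}\setminus p\mathbb{Z}_l$ (residues mod $pl$ not divisible by $p$). A tuple $\mathbf v\in\mathbb{Z}_{p,l}^k$ is $(k,p,l)$-proper if either there is an index $i$ with $\gcd(l,v_1,\ldots,v_{i-1},v_{i+1},\ldots,v_k)>1$, or there is $t\in\frac1{lp}\mathbb{Z}$ with $\lVert tv_j\rVert\ge\frac1{k+1}$ for all $j$; otherwise it is $(k,p,l)$-improper, and $I(k,p,l)$ is the set of improper tuples. *)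

theory Defs
  imports Complex_Main "HOL-Computational_Algebra.Primes"
begin

definition dist_int :: "real \<Rightarrow> real" where
  "dist_int x = \<bar>x - of_int (round x)\<bar>"

text \<open>Z_{p,l}: residues mod p*l (represented by 0..pl-1) not divisible by p.\<close>
definition Zpl :: "nat \<Rightarrow> nat \<Rightarrow> int set" where
  "Zpl p l = {a. 0 \<le> a \<and> a < int p * int l \<and> \<not> int p dvd a}"

text \<open>Tuples in Z_{p,l}^k are lists of length k (0-indexed).\<close>
definition proper :: "nat \<Rightarrow> nat \<Rightarrow> nat \<Rightarrow> int list \<Rightarrow> bool" where
  "proper k p l v \<longleftrightarrow>
     (\<exists>i<k. Gcd (insert (int l) {v ! j | j. j < k \<and> j \<noteq> i}) > 1) \<or>
     (\<exists>a::int. \<forall>j<k.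
        dist_int ((of_int a / (real l * real p)) * of_int (v ! j)) \<ge> 1 / (real k + 1))"

definition improper_set :: "nat \<Rightarrow> nat \<Rightarrow> nat \<Rightarrow> int list set" where
  "improper_set k p l = {v. length v = k \<and> set v \<subseteq> Zpl p l \<and> \<not> proper k p l v}"

end

theory Submission
  imports Defs
begin

text \<open>If \<open>t = a/(lp)\<close> witnessed properness of \<open>(1,\<dots>,k)\<close>, then \<open>\<parallel>j t\<parallel> \<ge> 1/(k+1)\<close>
  for \<open>1 \<le> j \<le> k\<close>. Pigeonholing the fractional parts of \<open>0, t, \<dots>, k t\<close> into \<open>k+1\<close>
  buckets of width \<open>1/(k+1)\<close> gives the sharp Dirichlet bound \<open>\<parallel>q t\<parallel> \<le> 1/(k+1)\<close> for
  some \<open>1 \<le> q \<le> k\<close>. Hence equality holds, i.e. \<open>(k+1) \<bar>q a - m l p\<bar> = l p\<close>, so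
  \<open>k+1\<close> divides \<open>l p\<close> and, \<open>p\<close> being a prime larger than \<open>k+1\<close>, also \<open>l\<close>.
  The gcd alternative fails because deleting one entry of \<open>(1,\<dots>,k)\<close> leaves \<open>1\<close>
  or both \<open>2\<close> and \<open>3\<close>.\<close>

theorem Dirichlet_approx_sharp:
  fixes \<theta> :: real and Q :: nat
  assumes "Q > 0"
  obtains q :: nat where "1 \<le> q" "q \<le> Q" "dist_int (real q * \<theta>) \<le> 1 / (real Q + 1)"
proof -
  define bucket where "bucket j = nat \<lfloor>(real Q + 1) * frac (real j * \<theta>)\<rfloor>" for j :: nat
  have bucket_le: "bucket j \<le> Q" for j
  proof -
    have "(real Q + 1) * frac (real j * \<theta>) < real Q + 1"
      using frac_lt_1 by simp
    then show ?thesis unfolding bucket_def by linarith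
  qed
  have bucket_eq: "real (bucket j) = of_int \<lfloor>(real Q + 1) * frac (real j * \<theta>)\<rfloor>" for j
    unfolding bucket_def by simp
  have bucket_bounds: "real (bucket j) \<le> (real Q + 1) * frac (real j * \<theta>)"
      "(real Q + 1) * frac (real j * \<theta>) < real (bucket j) + 1" for j
    unfolding bucket_eq by linarith+
  show thesis
  proof (cases "inj_on bucket {0..Q}")
    case False
    then obtain i j where ij: "i < j" "j \<le> Q" "bucket i = bucket j"
      by (auto simp: inj_on_def nat_neq_iff)
    have "\<bar>(real Q + 1) * frac (real j * \<theta>) - (real Q + 1) * frac (real i * \<theta>)\<bar> < 1"
      using bucket_bounds[of i] bucket_bounds[of j] ij(3) by linarith
    then have "(real Q + 1) * \<bar>frac (real j * \<theta>) - frac (real i * \<theta>)\<bar> < 1"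
      by (simp add: abs_mult flip: right_diff_distrib)
    then have close: "\<bar>frac (real j * \<theta>) - frac (real i * \<theta>)\<bar> < 1 / (real Q + 1)"
      by (simp add: field_simps)
    have "dist_int (real (j - i) * \<theta>)
          \<le> \<bar>real (j - i) * \<theta> - of_int (\<lfloor>real j * \<theta>\<rfloor> - \<lfloor>real i * \<theta>\<rfloor>)\<bar>"
      unfolding dist_int_def by (rule round_diff_minimal)
    also have "\<dots> = \<bar>frac (real j * \<theta>) - frac (real i * \<theta>)\<bar>"
      using ij(1) by (simp add: frac_def of_nat_diff algebra_simps)
    finally show thesis
      using that[of "j - i"] ij close by simp
  next
    case True
    then have "bucket ` {0..Q} = {0..Q}"
      using bucket_le by (intro endo_inj_surj) auto
    then obtain j where j: "j \<le> Q" "bucket j = Q"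
      by (metis atLeastAtMost_iff image_iff order_refl zero_le)
    have "bucket 0 = 0" unfolding bucket_def by simp
    then have "j \<noteq> 0" using j assms by (metis less_irrefl)
    have "real Q \<le> (real Q + 1) * frac (real j * \<theta>)"
      using bucket_bounds(1)[of j] j by simp
    then have near: "1 - frac (real j * \<theta>) \<le> 1 / (real Q + 1)"
      by (simp add: field_simps)
    have "dist_int (real j * \<theta>) \<le> \<bar>real j * \<theta> - of_int (\<lfloor>real j * \<theta>\<rfloor> + 1)\<bar>"
      unfolding dist_int_def by (rule round_diff_minimal)
    also have "\<dots> = 1 - frac (real j * \<theta>)"
      using frac_lt_1[of "real j * \<theta>"] by (simp add: frac_def)
    finally show thesis
      using that[of j] j \<open>j \<noteq> 0\<close> near by simp
  qed
qed

lemma dvd_if_dist_int_eq_inverse: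
  fixes b :: int and N n :: nat
  assumes "N > 0" "n > 0" "dist_int (of_int b / real N) = 1 / real n"
  shows "n dvd N"
proof -
  define m where "m = round (of_int b / real N)"
  have "of_int b / real N - of_int m = of_int (b - m * int N) / real N"
    using assms(1) by (simp add: diff_divide_distrib)
  then have "\<bar>of_int (b - m * int N)\<bar> / real N = 1 / real n"
    using assms(3) unfolding dist_int_def m_def by simp
  then have "real_of_int (int n * \<bar>b - m * int N\<bar>) = real_of_int (int N)"
    using assms(1,2) by (simp add: divide_eq_eq)
  then have "int n * \<bar>b - m * int N\<bar> = int N"
    by (simp only: of_int_eq_iff)
  then show ?thesis
    by (metis dvd_triv_left int_dvd_int_iff)
qed

lemma dvd_if_dist_int_multiples_ge:
  fixes a :: int and N K :: nat
  assumes "N > 0" "K > 0"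
    and far: "\<And>j. 1 \<le> j \<Longrightarrow> j \<le> K \<Longrightarrow> dist_int (of_int a / real N * real j) \<ge> 1 / (real K + 1)"
  shows "(K + 1) dvd N"
proof -
  obtain q where q: "1 \<le> q" "q \<le> K" "dist_int (real q * (of_int a / real N)) \<le> 1 / (real K + 1)"
    using Dirichlet_approx_sharp[OF \<open>K > 0\<close>] .
  have "dist_int (of_int a / real N * real q) = 1 / (real K + 1)"
    using q(3) far[OF q(1,2)] by (simp add: mult.commute[of "real q"])
  moreover have "of_int a / real N * real q = of_int (a * int q) / real N"
    by simp
  ultimately show ?thesis
    using dvd_if_dist_int_eq_inverse[OF \<open>N > 0\<close>, of "K + 1" "a * int q"] by simp
qed

lemma nth_map_int_upt:
  "j < k \<Longrightarrow> map int [1..<k+1] ! j = int (j + 1)"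
  by (simp del: upt_Suc add: nth_upt)

lemma Gcd_delete_nth_upt_eq_1:
  assumes "k \<ge> 3" "i < k"
  shows "Gcd {map int [1..<k+1] ! j | j. j < k \<and> j \<noteq> i} = 1"
    (is "Gcd ?A = 1")
proof -
  have mem: "int (j + 1) \<in> ?A" if "j < k" "j \<noteq> i" for j
    using that nth_map_int_upt[OF \<open>j < k\<close>] by force
  show ?thesis
  proof (cases "i = 0")
    case True
    have "Gcd ?A dvd 3 - 2"
      using mem[of 1] mem[of 2] True assms by (intro dvd_diff Gcd_dvd) simp_all
    then show ?thesis by simp
  next
    case False
    show ?thesis by (rule Gcd_eq_1_I[of 1]) (use mem[of 0] False assms in simp_all)
  qed
qed

lemma mem_Zpl_if_less_prime:
  fixes x :: int
  assumes "0 < x" "x < int p" "l > 0"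
  shows "x \<in> Zpl p l"
proof -
  have "int p \<le> int p * int l" using assms by simp
  then have "x < int p * int l" using assms by linarith
  moreover have "\<not> int p dvd x" using assms by (auto dest: zdvd_imp_le)
  ultimately show ?thesis using assms unfolding Zpl_def by simp
qed

lemma dvd_if_dist_int_nth_upt_ge:
  fixes a :: int and k N :: nat
  assumes "N > 0" "k > 0"
    and far: "\<forall>j<k. dist_int (of_int a / real N * of_int (map int [1..<k+1] ! j)) \<ge> 1 / (real k + 1)"
  shows "(k + 1) dvd N"
proof (rule dvd_if_dist_int_multiples_ge[OF assms(1,2)])
  fix j assume "1 \<le> j" "j \<le> k"
  then show "dist_int (of_int a / real N * real j) \<ge> 1 / (real k + 1)"
    using far[rule_format, of "j - 1"] nth_map_int_upt[of "j - 1" k] by simp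
qed

theorem mainTheorem7:
  fixes k p l :: nat
  assumes "k \<ge> 3" and "prime p" and "p > k + 1" and "l > 0"
  shows "(\<not> (k + 1) dvd l \<longrightarrow> map int [1..<k+1] \<in> improper_set k p l) \<and>
         (improper_set k p l = {} \<longrightarrow> (k + 1) dvd l)"
proof -
  define v where "v = map int [1..<k+1]"
  have "length v = k" and "set v \<subseteq> Zpl p l"
    unfolding v_def using assms by (auto intro!: mem_Zpl_if_less_prime)
  moreover have "\<not> (\<exists>i<k. Gcd (insert (int l) {v ! j | j. j < k \<and> j \<noteq> i}) > 1)"
    using Gcd_delete_nth_upt_eq_1[OF \<open>k \<ge> 3\<close>] by (simp add: v_def Gcd_insert)
  moreover have "\<not> (\<exists>a::int. \<forall>j<k.
      dist_int ((of_int a / (real l * real p)) * of_int (v ! j)) \<ge> 1 / (real k + 1))"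
    if "\<not> (k + 1) dvd l"
  proof
    assume "\<exists>a::int. \<forall>j<k.
      dist_int ((of_int a / (real l * real p)) * of_int (v ! j)) \<ge> 1 / (real k + 1)"
    then have "(k + 1) dvd l * p"
      using dvd_if_dist_int_nth_upt_ge[of "l * p" k] assms prime_gt_0_nat by (auto simp: v_def)
    moreover have "coprime (k + 1) p"
      using assms by (simp add: coprime_commute prime_imp_coprime nat_dvd_not_less)
    ultimately show False
      using that by (simp add: coprime_dvd_mult_left_iff)
  qed
  ultimately have "\<not> (k + 1) dvd l \<Longrightarrow> v \<in> improper_set k p l"
    unfolding improper_set_def proper_def by blast
  then show ?thesis
    unfolding v_def by blast
qed

end
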